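(* Let $n\geq 1$ and let $\varphi=\frac{1+\sqrt5}{2}$. If ${\bf f}[n]=a$, then $V(n)=\lceil n/\varphi^2\rceil$, equivalently $V(n)$ equals the number of occurrences of $b$ in ${\bf f}(0..n]$ plus one. If ${\bf f}[n]=b$, then $V(n)=\lceil n/\varphi^3\rceil$, equivalently $V(n)$ equals the number of occurrences of the factor $aa$ in ${\bf f}(0..n]$ plus one.
   Context: Fibonacci numbers: $F_0=0$, $F_1=1$, $F_{m+2}=F_{m+1}+F_m$. Standard Fibonacci words over $\{a,b\}$: $f_{-1}=b$, $f_0=a$, $f_{m+1}=f_mf_{m-1}$ for $m\geq 0$ (so $|f_m|=F_{m+2}$). The Fibonacci infinite word is ${\bf f}=\lim_{m\to\infty} f_m=abaababaab\cdots$, indexed from ${\bf f}[1]=a$; ${\bf f}(0..j]$ denotes its prefix of length $j$. For nonnegative integers $k_m,\dots,k_0$, $[k_m\cdots k_0]_F$ denotes $\sum_{i=0}^m k_iF_{i+2}$. A representation $N=[k_m\cdots k_0]_F$ with all $k_i\geq 0$ is valid if ${\bf f}(0..N]=f_m^{k_m}\cdots f_0^{k_0}$. $V(N)$ denotes the number of valid representations of $N$ (up to leading zeros), i.e. the number of factorizations of ${\bf f}(0..N]$ as a concatenation $f_m^{k_m}\cdots f_0^{k_0}$ of standard words $f_i$, $i\geq 0$, in non-strictly decreasing order of index; $V(0)=1$. *)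

theory Defs
  imports Complex_Main
begin

datatype letter = A | B

fun fw :: "nat \<Rightarrow> letter list" where
  "fw 0 = [A]"
| "fw (Suc 0) = [A, B]"
| "fw (Suc (Suc m)) = fw (Suc m) @ fw m"

text \<open>The Fibonacci infinite word, 1-indexed: f[i] (i >= 1). Every f_m is a prefix
  of f_{m+1}, and |f_i| >= i+1, so the limit's i-th letter is the i-th letter of f_i.\<close>
definition fib_inf :: "nat \<Rightarrow> letter" where
  "fib_inf i = fw i ! (i - 1)"

definition fib_prefix :: "nat \<Rightarrow> letter list" where
  "fib_prefix j = take j (fw j)"

text \<open>A representation is a list ks with ks ! i = k_i (no leading zeros, i.e. last
  entry nonzero). Its word is f_m^{k_m} ... f_0^{k_0}.\<close>
definition rep_word :: "nat list \<Rightarrow> letter list" where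
  "rep_word ks = concat (map (\<lambda>i. concat (replicate (ks ! i) (fw i))) (rev [0..<length ks]))"

definition valid_reps :: "nat \<Rightarrow> nat list set" where
  "valid_reps N = {ks. (ks = [] \<or> last ks \<noteq> 0) \<and> rep_word ks = fib_prefix N}"

definition V :: "nat \<Rightarrow> nat" where
  "V N = card (valid_reps N)"

definition count_b :: "letter list \<Rightarrow> nat" where
  "count_b w = length (filter (\<lambda>c. c = B) w)"

definition count_aa :: "letter list \<Rightarrow> nat" where
  "count_aa w = card {i. Suc i < length w \<and> w ! i = A \<and> w ! Suc i = A}"

definition phi :: real where
  "phi = (1 + sqrt 5) / 2"

end

theory Submission
  imports Defs "HOL-Library.Sublist" "HOL-Computational_Algebra.Primes"
begin

(* The morphism sigma: a -> ab, b -> a maps f_m to f_{m+1}, so a representation k_0 k_1 ... k_m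
   of a word w is exactly a factorisation w = sigma(w') a^{k_0} where k_1 ... k_m represents w'.
   Writing w = sigma(u) a^j with u empty or ending in a, we get k_0 = j or k_0 = j - 1 (no
   representation ends in bb), hence the recurrence V(sigma(u) a^j) = V(u) + [j > 0] V(u b).
   Every prefix of the Fibonacci word is sigma(u) or sigma(u) a for a shorter prefix u, and
   induction along this desubstitution shows that a prefix v has |v|_b + 1 representations if it
   ends in a and |v|_aa + 1 if it ends in b. Along the same induction, the prefix of length n
   contains floor((n + 1) / phi^2) letters b; as n / phi^2 is irrational for n > 0, both counts
   become the stated ceilings. *)

section \<open>The Fibonacci morphism\<close>

fun sigma_letter :: "letter \<Rightarrow> letter list" where
  "sigma_letter A = [A, B]"
| "sigma_letter B = [A]"

definition sigma :: "letter list \<Rightarrow> letter list" where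
  "sigma w = concat (map sigma_letter w)"

lemma sigma_Nil [simp]: "sigma [] = []"
  and sigma_Cons [simp]: "sigma (x # w) = sigma_letter x @ sigma w"
  and sigma_append [simp]: "sigma (u @ w) = sigma u @ sigma w"
  by (simp_all add: sigma_def)

lemma sigma_concat: "sigma (concat ws) = concat (map sigma ws)"
  by (induction ws) simp_all

lemma sigma_replicate_B [simp]: "sigma (replicate d B) = replicate d A"
  by (induction d) simp_all

lemma sigma_eq_Nil_iff [simp]: "sigma w = [] \<longleftrightarrow> w = []"
  by (cases w; cases "hd w") simp_all

lemma hd_sigma: "w \<noteq> [] \<Longrightarrow> hd (sigma w) = A"
  by (cases w; cases "hd w") simp_all

lemma last_sigma: "w \<noteq> [] \<Longrightarrow> last (sigma w) = (if last w = A then B else A)"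
proof (induction w rule: rev_induct)
  case (snoc x w)
  then show ?case by (cases x) simp_all
qed simp

lemma sigma_eq_append_A: "sigma w = v @ [A] \<longleftrightarrow> (\<exists>w0. w = w0 @ [B] \<and> sigma w0 = v)"
  by (cases w rule: rev_cases; cases "last w") auto

lemma sigma_eq_append_B: "sigma w = v @ [B] \<longleftrightarrow> (\<exists>w0. w = w0 @ [A] \<and> v = sigma w0 @ [A])"
  by (cases w rule: rev_cases; cases "last w") auto

lemma split_trailing_B: "\<exists>u d. w = u @ replicate d B \<and> (u = [] \<or> last u = A)"
proof (induction w rule: rev_induct)
  case (snoc x w)
  then obtain u d where "w = u @ replicate d B" "u = [] \<or> last u = A"
    by blast
  show ?case
  proof (cases x)
    case A
    then show ?thesis
      by (intro exI[of _ "w @ [A]"] exI[of _ 0]) simp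
  next
    case B
    with \<open>w = u @ replicate d B\<close> \<open>u = [] \<or> last u = A\<close> show ?thesis
      by (intro exI[of _ u] exI[of _ "Suc d"]) (simp flip: replicate_append_same)
  qed
qed simp

lemma not_prefix_B_sigma: "\<not> prefix (B # v) (sigma w)"
  by (cases w; cases "hd w") simp_all

lemma BB_free_sigma: "\<not> sublist [B, B] (sigma w)"
proof (induction w)
  case (Cons x w)
  then show ?case
    using not_prefix_B_sigma[of "[]" w] by (cases x) (simp_all add: sublist_code(3))
qed simp

lemma AAA_free_sigma: "\<not> sublist [B, B] w \<Longrightarrow> \<not> sublist [A, A, A] (sigma w)"
proof (induction w)
  case (Cons x w)
  have "\<not> prefix [A, A] (sigma w)" if "x = B"
    using Cons.prems that by (cases w; cases "hd w") (simp_all add: sublist_code(3))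
  with Cons show ?case
    by (cases x) (simp_all add: sublist_code(3) sublist_Cons_right)
qed simp

fun desigma :: "letter list \<Rightarrow> letter list" where
  "desigma (A # B # r) = A # desigma r"
| "desigma (A # r) = B # desigma r"
| "desigma (B # r) = desigma r"
| "desigma [] = []"

lemma desigma_sigma: "desigma (sigma w) = w"
proof (induction w)
  case (Cons x w)
  have "sigma w = [] \<or> (\<exists>r. sigma w = A # r)"
    by (cases w; cases "hd w") auto
  then have "desigma (A # sigma w) = B # desigma (sigma w)"
    by auto
  with Cons.IH show ?case
    by (cases x) simp_all
qed simp

lemma inj_sigma: "inj sigma"
  by (rule inj_on_inverseI[of _ desigma]) (rule desigma_sigma)

lemma fw_Suc: "fw (Suc k) = sigma (fw k)"
proof (induction k rule: fw.induct)
  case (3 m)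
  then show ?case by (metis fw.simps(3) sigma_append)
qed simp_all

lemma rep_word_Nil [simp]: "rep_word [] = []"
  by (simp add: rep_word_def)

lemma rep_word_Cons: "rep_word (k # ks) = sigma (rep_word ks) @ replicate k A"
proof -
  define g where "g = (\<lambda>i. concat (replicate ((k # ks) ! i) (fw i)))"
  have "rev [0..<Suc (length ks)] = map Suc (rev [0..<length ks]) @ [0]"
    by (simp add: upt_conv_Cons rev_map map_Suc_upt[symmetric] del: upt_Suc)
  then have "rep_word (k # ks) = concat (map (g \<circ> Suc) (rev [0..<length ks])) @ g 0"
    by (simp add: rep_word_def g_def del: upt_Suc)
  also have "map (g \<circ> Suc) (rev [0..<length ks])
      = map (\<lambda>i. sigma (concat (replicate (ks ! i) (fw i)))) (rev [0..<length ks])"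
    by (simp add: g_def fw_Suc sigma_concat)
  finally show ?thesis
    by (simp add: rep_word_def sigma_concat g_def o_def)
qed


definition count_a :: "letter list \<Rightarrow> nat" where
  "count_a w = length (filter (\<lambda>c. c = A) w)"

lemma count_a_Nil [simp]: "count_a [] = 0"
  and count_a_Cons [simp]: "count_a (x # w) = (if x = A then 1 else 0) + count_a w"
  and count_a_append [simp]: "count_a (u @ w) = count_a u + count_a w"
  by (simp_all add: count_a_def)

lemma count_b_Nil [simp]: "count_b [] = 0"
  and count_b_Cons [simp]: "count_b (x # w) = (if x = B then 1 else 0) + count_b w"
  and count_b_append [simp]: "count_b (u @ w) = count_b u + count_b w"
  by (simp_all add: count_b_def)

lemma count_b_replicate_A [simp]: "count_b (replicate j A) = 0"
  by (induction j) simp_all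

lemma count_a_add_count_b: "count_a w + count_b w = length w"
proof (induction w)
  case (Cons x w)
  then show ?case by (cases x) simp_all
qed simp

lemma length_sigma: "length (sigma w) = length w + count_a w"
proof (induction w)
  case (Cons x w)
  then show ?case by (cases x) simp_all
qed simp

lemma count_b_sigma: "count_b (sigma w) = count_a w"
proof (induction w)
  case (Cons x w)
  then show ?case by (cases x) simp_all
qed simp

lemma count_aa_Nil [simp]: "count_aa [] = 0"
  by (simp add: count_aa_def)

lemma count_aa_Cons:
  "count_aa (x # w) = (if x = A \<and> w \<noteq> [] \<and> hd w = A then 1 else 0) + count_aa w"
proof -
  define S where "S v = {i. Suc i < length v \<and> v ! i = A \<and> v ! Suc i = A}" for v
  have count_aa_S: "count_aa v = card (S v)" for v
    by (simp add: count_aa_def S_def)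
  have "finite (S w)"
    unfolding S_def by (rule finite_subset[of _ "{..<length w}"]) auto
  have "i \<in> S (x # w) \<longleftrightarrow>
      (i = 0 \<and> x = A \<and> w \<noteq> [] \<and> hd w = A) \<or> (\<exists>j. i = Suc j \<and> j \<in> S w)" for i
    by (cases i) (auto simp: S_def hd_conv_nth)
  then have "S (x # w) =
      (if x = A \<and> w \<noteq> [] \<and> hd w = A then insert 0 (Suc ` S w) else Suc ` S w)"
    by auto
  with \<open>finite (S w)\<close> show ?thesis
    unfolding count_aa_S by (simp add: card_image)
qed

lemma count_aa_sigma: "w = [] \<or> last w = A \<Longrightarrow> count_aa (sigma w) = count_b w"
proof (induction w)
  case (Cons x w)
  with hd_sigma[of w] show ?case
    by (cases x) (auto simp: count_aa_Cons split: if_splits)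
qed simp

(* Such a word is a concatenation of the blocks ab and aab. *)
lemma count_a_eq_count_b_add_count_aa:
  assumes "\<not> sublist [B, B] w" "\<not> sublist [A, A, A] w" "w = [] \<or> hd w = A \<and> last w = B"
  shows "count_a w = count_b w + count_aa w"
  using assms
proof (induction "length w" arbitrary: w rule: less_induct)
  case less
  show ?case
  proof (cases "w = []")
    case False
    with less.prems(3) obtain w1 where w1: "w = A # w1" "w1 \<noteq> []" "last w1 = B"
      by (cases w) (auto split: if_splits)
    obtain r where shape: "w = A # B # r \<or> w = A # A # B # r"
    proof (cases "hd w1")
      case A
      with w1 obtain r2 where r2: "w = A # A # r2" "r2 \<noteq> []"
        by (cases w1) (auto split: if_splits)
      with less.prems(2) have "hd r2 = B"
        by (cases r2; cases "hd r2") (auto simp: sublist_code(3))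
      with r2 that show ?thesis
        by (cases r2) auto
    next
      case B
      with w1 that show ?thesis
        by (cases w1) auto
    qed
    then have "sublist r w"
      by (metis sublist_append_leftI append_Cons append_Nil)
    with less.prems(1,2) have free: "\<not> sublist [B, B] r" "\<not> sublist [A, A, A] r"
      by (meson sublist_order.order_trans)+
    have "r = [] \<or> hd r = A \<and> last r = B"
      using shape less.prems(1,3) by (cases r; cases "hd r") (auto simp: sublist_code(3))
    with free shape have "count_a r = count_b r + count_aa r"
      by (intro less.hyps) auto
    with shape show ?thesis
      by (auto simp: count_aa_Cons)
  qed simp
qed


section \<open>Representations of arbitrary words\<close>

definition no_leading_zero :: "nat list \<Rightarrow> bool" where
  "no_leading_zero ks \<longleftrightarrow> ks = [] \<or> last ks \<noteq> 0"

definition reps :: "letter list \<Rightarrow> nat list set" where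
  "reps w = {ks. no_leading_zero ks \<and> rep_word ks = w}"

definition nreps :: "letter list \<Rightarrow> nat" where
  "nreps w = card (reps w)"

lemma V_eq_nreps: "V N = nreps (fib_prefix N)"
  by (simp add: V_def nreps_def reps_def valid_reps_def no_leading_zero_def)

lemma no_leading_zero_Cons:
  "no_leading_zero (k # ks) \<longleftrightarrow> (if ks = [] then k \<noteq> 0 else no_leading_zero ks)"
  by (simp add: no_leading_zero_def)

lemma rep_word_hd_length:
  assumes "no_leading_zero ks" "ks \<noteq> []"
  shows "rep_word ks \<noteq> [] \<and> hd (rep_word ks) = A \<and> length ks \<le> length (rep_word ks)"
  using assms
proof (induction ks)
  case (Cons k ks)
  show ?case
  proof (cases "ks = []")
    case True
    with Cons.prems have "k \<noteq> 0"
      by (simp add: no_leading_zero_Cons)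
    with True show ?thesis
      by (cases k) (simp_all add: rep_word_Cons)
  next
    case False
    with Cons have IH:
      "rep_word ks \<noteq> [] \<and> hd (rep_word ks) = A \<and> length ks \<le> length (rep_word ks)"
      by (simp add: no_leading_zero_Cons)
    then have "count_a (rep_word ks) \<noteq> 0"
      by (cases "rep_word ks") simp_all
    with IH show ?thesis
      by (simp add: rep_word_Cons length_sigma hd_sigma)
  qed
qed simp

lemma nth_le_length_rep_word: "i < length ks \<Longrightarrow> ks ! i \<le> length (rep_word ks)"
proof (induction ks arbitrary: i)
  case (Cons k ks)
  show ?case
  proof (cases i)
    case (Suc j)
    with Cons have "ks ! j \<le> length (rep_word ks)"
      by simp
    with Suc show ?thesis
      by (simp add: rep_word_Cons length_sigma)
  qed (simp add: rep_word_Cons)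
qed simp

lemma finite_reps: "finite (reps w)"
proof (rule finite_subset)
  show "reps w \<subseteq> {ks. set ks \<subseteq> {0..length w} \<and> length ks \<le> length w}"
    using rep_word_hd_length nth_le_length_rep_word
    by (fastforce simp: reps_def in_set_conv_nth)
  show "finite {ks. set ks \<subseteq> {0..length w} \<and> length ks \<le> length w}"
    by (rule finite_lists_length_le) simp
qed

lemma reps_Nil: "reps [] = {[]}"
  using rep_word_hd_length by (auto simp: reps_def no_leading_zero_def)

lemma nreps_Nil [simp]: "nreps [] = 1"
  by (simp add: nreps_def reps_Nil)

lemma rep_word_ne_B: "rep_word ks \<noteq> [B]"
proof (cases ks)
  case (Cons k ks')
  have "sigma (rep_word ks') \<noteq> [B]"
    using hd_sigma[of "rep_word ks'"] by (cases "rep_word ks' = []") auto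
  with Cons show ?thesis
    by (cases k) (auto simp: rep_word_Cons append_eq_Cons_conv)
qed simp

lemma rep_word_ne_append_BB: "rep_word ks \<noteq> y @ [B, B]"
proof (cases ks)
  case (Cons k ks')
  have "sigma (rep_word ks') \<noteq> y @ [B, B]"
    using BB_free_sigma by (metis sublist_appendI append_Nil2)
  with Cons show ?thesis
    by (cases k) (auto simp: rep_word_Cons simp flip: replicate_append_same)
qed simp

lemma nreps_B [simp]: "nreps [B] = 0"
  using rep_word_ne_B by (simp add: nreps_def reps_def)

lemma sigma_append_replicate_eq:
  assumes u: "u = [] \<or> last u = A"
    and eq: "sigma r @ replicate k A = sigma u @ replicate j A"
  shows "k \<le> j \<and> r = u @ replicate (j - k) B"
proof (cases "k \<le> j")
  case False
  then have "replicate k A = replicate (k - j) A @ replicate j A"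
    by (simp flip: replicate_add)
  with eq have "sigma r @ replicate (k - j) A = sigma u"
    by simp
  moreover from False have "last (sigma r @ replicate (k - j) A) = A"
    by simp
  ultimately have False
    using False u last_sigma[of u] by (cases "u = []") auto
  then show ?thesis ..
next
  case True
  then have "replicate j A = replicate (j - k) A @ replicate k A"
    by (simp flip: replicate_add)
  with eq have "sigma r = sigma (u @ replicate (j - k) B)"
    by simp
  with True show ?thesis
    using inj_sigma by (metis injD)
qed

lemma reps_sigma_append_replicate_subset:
  assumes u: "u = [] \<or> last u = A" and nonempty: "u \<noteq> [] \<or> 0 < j"
  shows "reps (sigma u @ replicate j A)
    \<subseteq> Cons j ` reps u \<union> (if 0 < j then Cons (j - 1) ` reps (u @ [B]) else {})"
proof
  fix ks
  assume ks: "ks \<in> reps (sigma u @ replicate j A)"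
  show "ks \<in> Cons j ` reps u \<union> (if 0 < j then Cons (j - 1) ` reps (u @ [B]) else {})"
  proof (cases ks)
    case Nil
    with ks nonempty show ?thesis
      by (auto simp: reps_def)
  next
    case (Cons k ks')
    with ks have "sigma (rep_word ks') @ replicate k A = sigma u @ replicate j A"
      by (simp add: reps_def rep_word_Cons)
    with u have kj: "k \<le> j" and rep: "rep_word ks' = u @ replicate (j - k) B"
      using sigma_append_replicate_eq by blast+
    have "j - k \<le> 1"
    proof (rule ccontr)
      assume "\<not> j - k \<le> 1"
      then obtain d where "j - k = Suc (Suc d)"
        by (intro that[of "j - k - 2"]) simp
      moreover have "replicate (Suc (Suc d)) B = replicate d B @ [B, B]"
        by (induction d) simp_all
      ultimately show False
        using rep rep_word_ne_append_BB[of ks' "u @ replicate d B"] by simp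
    qed
    moreover from Cons ks have "ks' \<in> reps (rep_word ks')"
      by (auto simp: reps_def no_leading_zero_def split: if_splits)
    ultimately show ?thesis
      using Cons kj rep by (cases "j - k") auto
  qed
qed

lemma reps_sigma_append_replicate:
  assumes u: "u = [] \<or> last u = A" and nonempty: "u \<noteq> [] \<or> 0 < j"
  shows "reps (sigma u @ replicate j A)
    = Cons j ` reps u \<union> (if 0 < j then Cons (j - 1) ` reps (u @ [B]) else {})"
proof (rule equalityI[OF reps_sigma_append_replicate_subset[OF assms]])
  have "j # ks \<in> reps (sigma u @ replicate j A)" if "ks \<in> reps u" for ks
    using that nonempty by (auto simp: reps_def rep_word_Cons no_leading_zero_Cons)
  moreover have "(j - 1) # ks \<in> reps (sigma u @ replicate j A)"
    if "0 < j" "ks \<in> reps (u @ [B])" for ks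
  proof -
    from that have "ks \<noteq> []"
      by (auto simp: reps_def)
    moreover from \<open>0 < j\<close> have "replicate j A = A # replicate (j - 1) A"
      by (cases j) simp_all
    ultimately show ?thesis
      using that by (simp add: reps_def rep_word_Cons no_leading_zero_Cons)
  qed
  ultimately show "Cons j ` reps u \<union> (if 0 < j then Cons (j - 1) ` reps (u @ [B]) else {})
    \<subseteq> reps (sigma u @ replicate j A)"
    by auto
qed

lemma nreps_sigma_append_replicate:
  assumes "u = [] \<or> last u = A"
  shows "nreps (sigma u @ replicate j A) = nreps u + (if 0 < j then nreps (u @ [B]) else 0)"
proof (cases "u = [] \<and> j = 0")
  case False
  then have "u \<noteq> [] \<or> 0 < j"
    by auto
  moreover have "Cons j ` reps u \<inter> Cons (j - 1) ` reps (u @ [B]) = {}" if "0 < j"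
    using that by auto
  ultimately show ?thesis
    using reps_sigma_append_replicate[OF assms] finite_reps
    by (simp add: nreps_def card_Un_disjoint card_image)
qed simp

lemma nreps_sigma: "u = [] \<or> last u = A \<Longrightarrow> nreps (sigma u) = nreps u"
  using nreps_sigma_append_replicate[of u 0] by simp

lemma nreps_sigma_append_AA: "nreps (sigma s @ [A, A]) = nreps (sigma s @ [A])"
proof -
  obtain u d where s: "s = u @ replicate d B" and u: "u = [] \<or> last u = A"
    using split_trailing_B by blast
  have "nreps (sigma u @ replicate j A) = nreps u + nreps (u @ [B])" if "0 < j" for j
    using nreps_sigma_append_replicate[OF u] that by simp
  moreover have "sigma s @ [A, A] = sigma u @ replicate (d + 2) A"
    by (simp add: s numeral_2_eq_2 replicate_app_Cons_same)
  moreover have "sigma s @ [A] = sigma u @ replicate (d + 1) A"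
    by (simp add: s replicate_append_same)
  ultimately show ?thesis
    by (metis add_gr_0 zero_less_one zero_less_numeral)
qed


section \<open>Prefixes of the Fibonacci word\<close>

definition is_fib_prefix :: "letter list \<Rightarrow> bool" where
  "is_fib_prefix v \<longleftrightarrow> (\<exists>k. prefix v (fw k))"

lemma prefix_fw_Suc: "prefix (fw k) (fw (Suc k))"
  by (cases k) simp_all

lemma length_fw: "Suc k \<le> length (fw k)"
  by (induction k rule: fw.induct) simp_all

lemma length_fib_prefix: "length (fib_prefix n) = n"
  using length_fw[of n] by (simp add: fib_prefix_def)

lemma fib_prefix_Suc: "fib_prefix (Suc n) = fib_prefix n @ [fib_inf (Suc n)]"
proof -
  have "take n (fw (Suc n)) = take n (fw n)"
    using prefix_fw_Suc[of n] length_fw[of n] by (auto simp: prefix_def)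
  moreover have "n < length (fw (Suc n))"
    using length_fw[of "Suc n"] by simp
  ultimately show ?thesis
    by (simp add: fib_prefix_def fib_inf_def take_Suc_conv_app_nth)
qed

lemma is_fib_prefix_fib_prefix: "is_fib_prefix (fib_prefix n)"
  unfolding is_fib_prefix_def fib_prefix_def by (blast intro: take_is_prefix)

lemma is_fib_prefix_appendD: "is_fib_prefix (u @ w) \<Longrightarrow> is_fib_prefix u"
  unfolding is_fib_prefix_def by (blast intro: prefix_order.trans prefixI)

lemma hd_fw: "hd (fw k) = A"
proof (cases k)
  case (Suc m)
  have "fw m \<noteq> []"
    using length_fw[of m] by auto
  with Suc show ?thesis
    by (simp add: fw_Suc hd_sigma)
qed simp

lemma BB_free_fw: "\<not> sublist [B, B] (fw k)"
  by (cases k) (simp_all add: fw_Suc BB_free_sigma sublist_code(3))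

lemma AAA_free_fw: "\<not> sublist [A, A, A] (fw k)"
  by (cases k) (simp_all add: fw_Suc AAA_free_sigma BB_free_fw sublist_code(3))

lemma hd_fib_prefix: "is_fib_prefix v \<Longrightarrow> v \<noteq> [] \<Longrightarrow> hd v = A"
  using hd_fw by (metis is_fib_prefix_def prefix_def hd_append2)

lemma BB_free_fib_prefix: "is_fib_prefix v \<Longrightarrow> \<not> sublist [B, B] v"
  using BB_free_fw by (metis is_fib_prefix_def prefix_imp_sublist sublist_order.order_trans)

lemma AAA_free_fib_prefix: "is_fib_prefix v \<Longrightarrow> \<not> sublist [A, A, A] v"
  using AAA_free_fw by (metis is_fib_prefix_def prefix_imp_sublist sublist_order.order_trans)

lemma prefix_sigma_cases:
  "prefix v (sigma x) \<Longrightarrow>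
    \<exists>u. (prefix u x \<and> v = sigma u) \<or> (prefix (u @ [A]) x \<and> v = sigma u @ [A])"
proof (induction x arbitrary: v)
  case (Cons c x)
  show ?case
  proof (cases "v = [] \<or> (c = A \<and> v = [A])")
    case True
    then show ?thesis
      by (intro exI[of _ "[]"]) auto
  next
    case False
    with Cons.prems obtain v' where v: "v = sigma_letter c @ v'" and "prefix v' (sigma x)"
      by (cases c; cases v; cases "tl v") auto
    with Cons.IH obtain u where
      "(prefix u x \<and> v' = sigma u) \<or> (prefix (u @ [A]) x \<and> v' = sigma u @ [A])"
      by blast
    with v show ?thesis
      by (intro exI[of _ "c # u"]) auto
  qed
qed simp

lemma is_fib_prefix_desubst:
  assumes "is_fib_prefix v"
  obtains u where "is_fib_prefix u" "v = sigma u"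
    | u where "is_fib_prefix (u @ [A])" "v = sigma u @ [A]"
proof -
  from assms obtain k where "prefix v (fw k)"
    by (auto simp: is_fib_prefix_def)
  then have "prefix v (sigma (fw k))"
    using prefix_fw_Suc[of k] by (auto simp: fw_Suc intro: prefix_order.trans)
  then show ?thesis
    using prefix_sigma_cases that by (metis is_fib_prefix_def)
qed

lemma fib_prefix_append_B_last:
  assumes "is_fib_prefix (u @ [B])"
  shows "u \<noteq> [] \<and> last u = A"
proof -
  have "u \<noteq> []"
    using hd_fib_prefix[OF assms] by auto
  moreover have "last u \<noteq> B"
  proof
    assume "last u = B"
    with \<open>u \<noteq> []\<close> have "u @ [B] = butlast u @ [B, B]"
      by (metis append_butlast_last_id append_Cons append_Nil append_assoc)
    with BB_free_fib_prefix[OF assms] show False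
      by simp
  qed
  ultimately show ?thesis
    by (cases "last u") simp_all
qed

lemma fib_prefix_append_AA_last:
  assumes "is_fib_prefix (u @ [A, A])"
  shows "u = [] \<or> last u = B"
proof (rule ccontr)
  assume "\<not> (u = [] \<or> last u = B)"
  then have "u @ [A, A] = butlast u @ [A, A, A]"
    by (cases "last u") (simp_all, metis append_butlast_last_id append_Cons append_Nil append_assoc)
  with AAA_free_fib_prefix[OF assms] show False
    by simp
qed

lemma count_a_fib_prefix:
  assumes "is_fib_prefix w" "w = [] \<or> last w = B"
  shows "count_a w = count_b w + count_aa w"
  using assms BB_free_fib_prefix AAA_free_fib_prefix hd_fib_prefix
  by (blast intro: count_a_eq_count_b_add_count_aa)

lemma count_aa_add_count_b_fib_prefix:
  "is_fib_prefix w \<Longrightarrow> w = [] \<or> last w = B \<Longrightarrow> count_aa w + 2 * count_b w = length w"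
  using count_a_fib_prefix count_a_add_count_b[of w] by fastforce

lemma length_lt_length_sigma: "is_fib_prefix u \<Longrightarrow> u \<noteq> [] \<Longrightarrow> length u < length (sigma u)"
  using hd_fib_prefix[of u] by (cases u) (auto simp: length_sigma)

lemma fib_prefix_cases:
  assumes "is_fib_prefix v" "v \<noteq> []"
  obtains (sigma_A) u where "is_fib_prefix u" "u \<noteq> []" "last u = A" "v = sigma u"
    | (sigma_B) u j where "is_fib_prefix (u @ [B])" "0 < j" "v = sigma u @ replicate j A"
    | (sigma_AA) u where "is_fib_prefix (u @ [A, A])" "v = sigma (u @ [A]) @ [A]"
    | (single_A) "v = [A]"
  using assms(1)
proof (cases rule: is_fib_prefix_desubst)
  case (1 u)
  with assms(2) obtain u0 c where "u = u0 @ [c]"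
    by (cases u rule: rev_cases) auto
  with 1 that(1)[of u] that(2)[of u0 1] show ?thesis
    by (cases c) auto
next
  case (2 u)
  show ?thesis
  proof (cases u rule: rev_cases)
    case (snoc u0 c)
    with 2 that(3)[of u0] that(2)[of u0 2] is_fib_prefix_appendD[of "u0 @ [B]" "[A]"] show ?thesis
      by (cases c) (auto simp: numeral_2_eq_2)
  qed (use 2 that(4) in simp)
qed


lemma nreps_append_A:
  assumes "is_fib_prefix (t @ [B])"
  shows "nreps (t @ [A]) = nreps t"
proof -
  obtain s where "t @ [B] = sigma s"
    using assms by (cases rule: is_fib_prefix_desubst) auto
  then obtain s0 where "t = sigma s0 @ [A]"
    by (metis sigma_eq_append_B)
  then show ?thesis
    using nreps_sigma_append_AA[of s0] by simp
qed

lemma nreps_append_AB: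
  assumes "is_fib_prefix (u @ [A, A])"
  shows "nreps (u @ [A, B]) = nreps u"
proof -
  from assms obtain w where "is_fib_prefix (w @ [A])" "sigma w = u @ [A]"
  proof (cases rule: is_fib_prefix_desubst)
    case (1 w)
    then obtain w1 where "w = w1 @ [B]" "sigma w1 = u @ [A]"
      using sigma_eq_append_A[of w "u @ [A]"] by auto
    then obtain w0 where "w = w0 @ [B, B]"
      using sigma_eq_append_A[of w1 u] by auto
    with 1 show ?thesis
      using BB_free_fib_prefix by auto
  qed (use that in auto)
  then obtain t where t: "w = t @ [B]" "sigma t = u" "is_fib_prefix (t @ [B])"
    by (auto simp: sigma_eq_append_A dest: is_fib_prefix_appendD)
  then have "t \<noteq> [] \<and> last t = A"
    using fib_prefix_append_B_last by blast
  then have "nreps (sigma t @ [A, B]) = nreps (t @ [A])" "nreps (sigma t) = nreps t"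
    using nreps_sigma[of "t @ [A]"] nreps_sigma[of t] by simp_all
  with t nreps_append_A show ?thesis
    by simp
qed

lemma nreps_fib_prefix_sigma_B:
  assumes "is_fib_prefix (u @ [B])" "0 < j"
    and "nreps u = count_b u + 1" "nreps (u @ [B]) = count_aa (u @ [B]) + 1"
  shows "nreps (sigma u @ replicate j A) = count_b (sigma u @ replicate j A) + 1"
proof -
  have "u \<noteq> [] \<and> last u = A"
    using fib_prefix_append_B_last[OF assms(1)] .
  then have "nreps (sigma u @ replicate j A) = count_b u + count_aa (u @ [B]) + 2"
    using assms(2-4) by (simp add: nreps_sigma_append_replicate)
  also have "\<dots> = count_a (u @ [B]) + 1"
    using count_a_fib_prefix[OF assms(1)] by simp
  finally show ?thesis
    by (simp add: count_b_sigma)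
qed

lemma nreps_fib_prefix_sigma_AA:
  assumes "is_fib_prefix (u @ [A, A])"
    and "nreps (u @ [A]) = count_b (u @ [A]) + 1" "nreps u = count_aa u + 1"
  shows "nreps (sigma (u @ [A]) @ [A]) = count_b (sigma (u @ [A]) @ [A]) + 1"
proof -
  have "nreps (sigma (u @ [A]) @ [A]) = nreps (u @ [A]) + nreps (u @ [A, B])"
    using nreps_sigma_append_replicate[of "u @ [A]" 1] by simp
  also have "\<dots> = count_b u + count_aa u + 2"
    using assms nreps_append_AB by simp
  also have "count_b u + count_aa u = count_a u"
    using assms(1) fib_prefix_append_AA_last[OF assms(1)]
    by (metis count_a_fib_prefix is_fib_prefix_appendD)
  finally show ?thesis
    by (simp add: count_b_sigma)
qed

lemma nreps_fib_prefix:
  assumes "is_fib_prefix v" "v \<noteq> []"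
  shows "nreps v = (if last v = A then count_b v + 1 else count_aa v + 1)"
  using assms
proof (induction "length v" arbitrary: v rule: less_induct)
  case less
  have IH: "nreps u = (if last u = A then count_b u + 1 else count_aa u + 1)"
    if "length u < length v" "is_fib_prefix u" "u \<noteq> []" for u
    using less.hyps that by blast
  from less.prems show ?case
  proof (cases rule: fib_prefix_cases)
    case (sigma_A u)
    with IH[of u] show ?thesis
      by (simp add: nreps_sigma last_sigma count_aa_sigma length_lt_length_sigma)
  next
    case (sigma_B u j)
    moreover from sigma_B have "u \<noteq> [] \<and> last u = A"
      by (simp add: fib_prefix_append_B_last)
    moreover have "length (u @ [B]) < length v"
      using sigma_B length_lt_length_sigma[of "u @ [B]"] by simp
    ultimately show ?thesis
      using IH[of u] IH[of "u @ [B]"] nreps_fib_prefix_sigma_B[of u j]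
      by (simp add: is_fib_prefix_appendD)
  next
    case (sigma_AA u)
    moreover have "length (u @ [A]) < length v"
      using sigma_AA length_lt_length_sigma[of "u @ [A]"] by (simp add: is_fib_prefix_appendD)
    moreover have "nreps u = count_aa u + 1"
      using IH[of u] fib_prefix_append_AA_last[OF sigma_AA(1)] calculation
      by (cases "u = []") (simp_all add: is_fib_prefix_appendD)
    ultimately show ?thesis
      using IH[of "u @ [A]"] nreps_fib_prefix_sigma_AA[of u] by (simp add: is_fib_prefix_appendD)
  next
    case single_A
    then show ?thesis
      using nreps_sigma_append_replicate[of "[]" 1] by simp
  qed
qed


section \<open>The number of letters b in a prefix\<close>

lemma sqrt_5_irrational: "sqrt 5 \<notin> \<rat>"
proof
  assume "sqrt 5 \<in> \<rat>"
  then obtain m n :: nat where n: "n \<noteq> 0" and "\<bar>sqrt 5\<bar> = m / n"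
    by (rule Rats_abs_nat_div_natE)
  then have "real m = sqrt 5 * real n"
    by (simp add: field_simps)
  then have "real (m ^ 2) = real (5 * n ^ 2)"
    by (simp add: power_mult_distrib)
  then have eq: "m ^ 2 = 5 * n ^ 2"
    by (simp only: of_nat_eq_iff)
  with n have "m \<noteq> 0"
    by (cases m) simp_all
  have p: "prime (5::nat)"
    by (simp add: prime_nat_iff' atLeastLessThan_nat_numeral)
  have "multiplicity 5 (m ^ 2) = multiplicity 5 (5 * n ^ 2)"
    by (simp only: eq)
  then have "2 * multiplicity 5 m = Suc (2 * multiplicity 5 n)"
    using p n \<open>m \<noteq> 0\<close>
    by (simp add: prime_elem_multiplicity_power_distrib prime_elem_multiplicity_mult_distrib)
  then show False
    by presburger
qed

(* alpha = 1 / phi^2 (inverse_phi_sq) is the frequency of the letter b in the Fibonacci word. *)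
definition alpha :: real where
  "alpha = (3 - sqrt 5) / 2"

lemma alpha_bounds: "0 < alpha" "alpha < 1 / 2"
proof -
  have "sqrt 4 < sqrt (5::real)" "sqrt 5 < sqrt (9::real)"
    by (rule real_sqrt_less_mono, simp)+
  then show "0 < alpha" "alpha < 1 / 2"
    by (simp_all add: alpha_def)
qed

lemma alpha_sq: "alpha\<^sup>2 = 3 * alpha - 1"
  by (simp add: alpha_def power2_eq_square field_simps)

lemma phi_pos: "0 < phi"
  by (simp add: phi_def add_pos_nonneg)

lemma inverse_phi_sq: "1 / phi ^ 2 = alpha"
proof -
  have "phi ^ 2 * alpha = 1"
    by (simp add: phi_def alpha_def power2_eq_square field_simps)
  with phi_pos show ?thesis
    by (simp add: field_simps)
qed

lemma inverse_phi_cube: "1 / phi ^ 3 = 1 - 2 * alpha"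
proof -
  have "phi ^ 3 * (1 - 2 * alpha) = 1"
    by (simp add: phi_def alpha_def power3_eq_cube field_simps)
  with phi_pos show ?thesis
    by (simp add: field_simps)
qed

lemma mult_alpha_not_int: "0 < m \<Longrightarrow> real m * alpha \<noteq> of_int k"
proof
  assume "0 < m" "real m * alpha = of_int k"
  then have "sqrt 5 = 3 - 2 * of_int k / real m"
    by (simp add: alpha_def field_simps)
  then have "sqrt 5 \<in> \<rat>"
    by simp
  with sqrt_5_irrational show False ..
qed

lemma floor_mult_alpha_step:
  fixes m b :: nat
  assumes b: "int b = \<lfloor>real (m + 1) * alpha\<rfloor>"
  shows "b \<le> m"
    and "\<lfloor>real (2 * m - b + 1) * alpha\<rfloor> = int (m - b)"
    and "\<lfloor>real (2 * m - b + 2) * alpha\<rfloor> = int (m - b)"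
proof -
  define \<theta> where "\<theta> = real b + 1 - real (m + 1) * alpha"
  have lower: "real b \<le> real (m + 1) * alpha" and "real (m + 1) * alpha < real b + 1"
    using b by linarith+
  moreover have "real (m + 1) * alpha \<noteq> real b"
    using mult_alpha_not_int[of "m + 1" "int b"] by simp
  ultimately have \<theta>: "0 < \<theta>" "\<theta> < 1"
    by (auto simp: \<theta>_def)
  have "real (m + 1) * alpha < real (m + 1)"
    using alpha_bounds by simp
  with lower have "real b < real (m + 1)"
    by linarith
  then show "b \<le> m"
    by simp
  have "real (m + 1) * (alpha * alpha) = real (m + 1) * (3 * alpha - 1)"
    using alpha_sq by (simp add: power2_eq_square)
  with \<open>b \<le> m\<close> have key: "real (2 * m - b + 1) * alpha = real (m - b) + (1 - alpha) * \<theta>"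
    by (simp add: \<theta>_def of_nat_diff algebra_simps)
  define \<epsilon> where "\<epsilon> = (1 - alpha) * \<theta>"
  have "\<epsilon> < 1 - alpha"
    using mult_strict_left_mono[OF \<theta>(2), of "1 - alpha"] alpha_bounds by (simp add: \<epsilon>_def)
  moreover have "0 < \<epsilon>"
    using \<theta> alpha_bounds by (simp add: \<epsilon>_def)
  moreover note key[folded \<epsilon>_def]
  moreover have "real (2 * m - b + 2) * alpha = real (2 * m - b + 1) * alpha + alpha"
    by (simp add: algebra_simps)
  ultimately show "\<lfloor>real (2 * m - b + 1) * alpha\<rfloor> = int (m - b)"
    and "\<lfloor>real (2 * m - b + 2) * alpha\<rfloor> = int (m - b)"
    using alpha_bounds by (simp_all add: floor_eq_iff)
qed

lemma count_b_fib_prefix_floor: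
  "is_fib_prefix v \<Longrightarrow> int (count_b v) = \<lfloor>real (length v + 1) * alpha\<rfloor>"
proof (induction "length v" arbitrary: v rule: less_induct)
  case less
  show ?case
  proof (cases "v = [] \<or> v = [A]")
    case True
    have "\<lfloor>alpha\<rfloor> = 0" "\<lfloor>2 * alpha\<rfloor> = 0"
      using alpha_bounds by (simp_all add: floor_eq_iff)
    with True show ?thesis
      by auto
  next
    case False
    obtain u where u: "is_fib_prefix u" and v: "v = sigma u \<or> v = sigma u @ [A]"
      using less.prems by (cases rule: is_fib_prefix_desubst) (auto dest: is_fib_prefix_appendD)
    with False have "u \<noteq> []"
      by auto
    with u have "length u < length (sigma u)"
      by (rule length_lt_length_sigma)
    with u v have "int (count_b u) = \<lfloor>real (length u + 1) * alpha\<rfloor>"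
      by (intro less.hyps) auto
    note step = floor_mult_alpha_step[OF this]
    have "length v + 1 = 2 * length u - count_b u + (if v = sigma u then 1 else 2)"
      using v step(1) count_a_add_count_b[of u] by (auto simp: length_sigma)
    moreover have "count_b v = length u - count_b u"
      using v count_a_add_count_b[of u] by (auto simp: count_b_sigma)
    ultimately show ?thesis
      using step(2,3) by (auto simp: ac_simps)
  qed
qed

lemma count_b_fib_prefix: "int (count_b (fib_prefix n)) = \<lfloor>real (n + 1) * alpha\<rfloor>"
  using count_b_fib_prefix_floor[OF is_fib_prefix_fib_prefix] by (simp add: length_fib_prefix)

lemma ceiling_mult_alpha: "0 < n \<Longrightarrow> \<lceil>real n * alpha\<rceil> = \<lfloor>real n * alpha\<rfloor> + 1"
  using mult_alpha_not_int by (simp add: ceiling_altdef)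

lemma ceiling_mult_one_minus_two_alpha:
  assumes "\<lfloor>real (n + 1) * alpha\<rfloor> = \<lfloor>real n * alpha\<rfloor> + 1"
  shows "\<lceil>real n * (1 - 2 * alpha)\<rceil> = int n - 2 * \<lfloor>real (n + 1) * alpha\<rfloor> + 1"
proof -
  define F where "F = \<lfloor>real n * alpha\<rfloor>"
  have "of_int (F + 1) \<le> real (n + 1) * alpha"
    using assms of_int_floor_le unfolding F_def by metis
  moreover have "real n * alpha < of_int F + 1"
    unfolding F_def by simp
  ultimately have "\<lceil>real n * (1 - 2 * alpha)\<rceil> = int n - 2 * F - 1"
    using alpha_bounds by (intro ceiling_unique) (simp_all add: algebra_simps)
  with assms show ?thesis
    by (simp add: F_def)
qed

lemma V_Suc_eq_counts:
  "V (Suc k) = (if fib_inf (Suc k) = A then count_b (fib_prefix (Suc k)) + 1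
                else count_aa (fib_prefix (Suc k)) + 1)"
  using nreps_fib_prefix[OF is_fib_prefix_fib_prefix, of "Suc k"]
  by (simp add: V_eq_nreps fib_prefix_Suc)

lemma V_fib_inf_A:
  assumes "fib_inf (Suc k) = A"
  shows "V (Suc k) = count_b (fib_prefix (Suc k)) + 1"
    and "int (V (Suc k)) = \<lceil>real (Suc k) * alpha\<rceil>"
proof -
  from assms show "V (Suc k) = count_b (fib_prefix (Suc k)) + 1"
    using V_Suc_eq_counts[of k] by simp
  moreover have "count_b (fib_prefix (Suc k)) = count_b (fib_prefix k)"
    using assms by (simp add: fib_prefix_Suc)
  ultimately show "int (V (Suc k)) = \<lceil>real (Suc k) * alpha\<rceil>"
    using count_b_fib_prefix[of k] ceiling_mult_alpha[of "Suc k"] by simp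
qed

lemma V_fib_inf_B:
  assumes "fib_inf (Suc k) = B"
  shows "V (Suc k) = count_aa (fib_prefix (Suc k)) + 1"
    and "int (V (Suc k)) = \<lceil>real (Suc k) * (1 - 2 * alpha)\<rceil>"
proof -
  from assms show "V (Suc k) = count_aa (fib_prefix (Suc k)) + 1"
    using V_Suc_eq_counts[of k] by simp
  moreover have "last (fib_prefix (Suc k)) = B"
    using assms by (simp add: fib_prefix_Suc)
  then have "count_aa (fib_prefix (Suc k)) + 2 * count_b (fib_prefix (Suc k)) = Suc k"
    using count_aa_add_count_b_fib_prefix is_fib_prefix_fib_prefix length_fib_prefix by metis
  moreover have "\<lfloor>real (Suc k + 1) * alpha\<rfloor> = \<lfloor>real (Suc k) * alpha\<rfloor> + 1"
    using assms count_b_fib_prefix[of k] count_b_fib_prefix[of "Suc k"] by (simp add: fib_prefix_Suc)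
  ultimately show "int (V (Suc k)) = \<lceil>real (Suc k) * (1 - 2 * alpha)\<rceil>"
    using ceiling_mult_one_minus_two_alpha[of "Suc k"] count_b_fib_prefix[of "Suc k"] by simp
qed

theorem theorem1:
  fixes n :: nat
  assumes "n \<ge> 1"
  shows "(fib_inf n = A \<longrightarrow>
            int (V n) = \<lceil>real n / phi ^ 2\<rceil> \<and> V n = count_b (fib_prefix n) + 1)
       \<and> (fib_inf n = B \<longrightarrow>
            int (V n) = \<lceil>real n / phi ^ 3\<rceil> \<and> V n = count_aa (fib_prefix n) + 1)"
proof -
  obtain k where n: "n = Suc k"
    using assms by (cases n) auto
  have "real n / phi ^ 2 = real n * alpha" "real n / phi ^ 3 = real n * (1 - 2 * alpha)"
    by (simp flip: inverse_phi_sq, simp flip: inverse_phi_cube)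
  with n show ?thesis
    using V_fib_inf_A[of k] V_fib_inf_B[of k] by auto
qed

end
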